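(* Let $k\ge1$ and $a_1,\dots,a_k\in\Sigma$ with $a_i\neq a_{i+1}$ for $1\le i<k$, and let $L[a_1,\dots,a_k]=\Sigma^*a_1\Sigma^*a_2\Sigma^*\cdots\Sigma^*a_k\Sigma^*$. Then the MON-1qfa $A[a_1,\dots,a_k]$ recognizes $L[a_1,\dots,a_k]$ with cut-point $\lambda=\frac{1}{2^{2k+1}}$ isolated by $\delta=\frac{1}{2^{2(k+1)}}$.
   Context: A MON-1qfa over a finite alphabet $\Sigma$ is a tuple $A=\langle\Sigma\cup\{\#\},(O_c)_{c\in\Sigma\cup\{\#\}},\pi_0,F\rangle$, where $\pi_0\in\mathbb{C}^{1\times m}$ has norm $1$, each $O_c$ is an observable with spectral decomposition into orthogonal projectors $P_c(r)$, $r\in V(O_c)$, and $F\subseteq V(O_\#)$. For $x=x_1\cdots x_n$, with $\rho_0=\pi_0^\dagger\pi_0$ and $\rho_i=\sum_{r}P_{x_i}(r)\rho_{i-1}P_{x_i}(r)$, the acceptance probability is $p_A(x)=\sum_{r\in F}\mathrm{tr}(P_\#(r)\rho_n)$. $A$ recognizes $L$ with cut-point $\lambda$ isolated by $\delta>0$ if for all $x\in\Sigma^*$: $x\in L\Leftrightarrow p_A(x)>\lambda$, and $|p_A(x)-\lambda|\ge\delta$. Construction: let $S=\{a_1,\dots,a_k\}$; for $\alpha\in S$ let $j^{(\alpha)}_1<\dots<j^{(\alpha)}_{\#\alpha}$ be all indices $j$ with $a_j=\alpha$. Define the $(k+1)\times(k+1)$ matrices: $(P_\nearrow^{(k)}(\alpha))_{rs}=1$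 if $r=s$ and $r\notin\{j^{(\alpha)}_i,j^{(\alpha)}_i+1\}$ for all $i$; $=\frac12$ if $r,s\in\{j^{(\alpha)}_i,j^{(\alpha)}_i+1\}$ for some $i$; $=0$ otherwise. $(P_\searrow^{(k)}(\alpha))_{rs}=\frac12$ if $r=s\in\{j^{(\alpha)}_i,j^{(\alpha)}_i+1\}$ for some $i$; $=-\frac12$ if $r\neq s$ and $r,s\in\{j^{(\alpha)}_i,j^{(\alpha)}_i+1\}$ for some $i$; $=0$ otherwise. (These are complementary orthogonal projectors.) Let $e_j$ be the $j$-th standard basis row vector of length $k+1$. $A[a_1,\dots,a_k]$ is the MON-1qfa of dimension $k+1$ with initial state $\pi_0=e_1$; for $\alpha\in S$, $O_\alpha$ is the two-outcome observable with projectors $P_\nearrow^{(k)}(\alpha)$ and $P_\searrow^{(k)}(\alpha)$; for $\sigma\in\Sigma\setminus S$, $O_\sigma$ has the single projector $I_{(k+1)\times(k+1)}$; $O_\#$ is a two-outcome observable whose accepting outcome (the set $F$) has projector $e_{k+1}^Te_{k+1}$ and whose other outcome has projector $I-e_{k+1}^Te_{k+1}$. *)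

theory Defs
  imports "Jordan_Normal_Form.Matrix"
begin

text \<open>Symbols of the extended alphabet are
  'a option: Some c is the letter c, None is the end marker #.
  For each symbol c the observable O_c is given by its (finite) set of outcomes
  (eigenvalues) qvals c of type 'r and the projectors qproj c r of its spectral
  decomposition. qacc is the accepting set F (a subset of the outcomes of O_#).\<close>

record ('a, 'r) mon1qfa =
  qdim  :: nat
  qinit :: "complex vec"
  qvals :: "'a option \<Rightarrow> 'r set"
  qproj :: "'a option \<Rightarrow> 'r \<Rightarrow> complex mat"
  qacc  :: "'r set"

definition mtrace :: "complex mat \<Rightarrow> complex" where
  "mtrace M = (\<Sum>i<dim_row M. M $$ (i, i))"

definition is_orth_projector :: "nat \<Rightarrow> complex mat \<Rightarrow> bool" where
  "is_orth_projector m P \<longleftrightarrow> P \<in> carrier_mat m m \<and> P * P = P \<and>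
     (\<forall>i<m. \<forall>j<m. P $$ (i, j) = cnj (P $$ (j, i)))"

definition is_observable :: "nat \<Rightarrow> 'r set \<Rightarrow> ('r \<Rightarrow> complex mat) \<Rightarrow> bool" where
  "is_observable m V P \<longleftrightarrow> finite V \<and> V \<noteq> {} \<and>
     (\<forall>r\<in>V. is_orth_projector m (P r) \<and> P r \<noteq> 0\<^sub>m m m) \<and>
     (\<forall>r\<in>V. \<forall>s\<in>V. r \<noteq> s \<longrightarrow> P r * P s = 0\<^sub>m m m) \<and>
     (\<forall>i<m. \<forall>j<m. (\<Sum>r\<in>V. P r $$ (i, j)) = (1\<^sub>m m :: complex mat) $$ (i, j))"

definition is_mon1qfa :: "'a set \<Rightarrow> ('a, 'r) mon1qfa \<Rightarrow> bool" where
  "is_mon1qfa Sig A \<longleftrightarrow>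
     qinit A \<in> carrier_vec (qdim A) \<and>
     (\<Sum>i<qdim A. (cmod (qinit A $ i))\<^sup>2) = 1 \<and>
     (\<forall>c \<in> insert None (Some ` Sig). is_observable (qdim A) (qvals A c) (qproj A c)) \<and>
     qacc A \<subseteq> qvals A None"

definition rho0 :: "('a, 'r) mon1qfa \<Rightarrow> complex mat" where
  "rho0 A = mat (qdim A) (qdim A) (\<lambda>(i, j). cnj (qinit A $ i) * qinit A $ j)"

definition measure_step :: "('a, 'r) mon1qfa \<Rightarrow> 'a option \<Rightarrow> complex mat \<Rightarrow> complex mat" where
  "measure_step A c \<rho> = mat (qdim A) (qdim A)
     (\<lambda>(i, j). \<Sum>r\<in>qvals A c. (qproj A c r * \<rho> * qproj A c r) $$ (i, j))"

definition rho_after :: "('a, 'r) mon1qfa \<Rightarrow> 'a list \<Rightarrow> complex mat" where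
  "rho_after A x = foldl (\<lambda>\<rho> c. measure_step A (Some c) \<rho>) (rho0 A) x"

definition p_acc :: "('a, 'r) mon1qfa \<Rightarrow> 'a list \<Rightarrow> real" where
  "p_acc A x = Re (\<Sum>r\<in>qacc A. mtrace (qproj A None r * rho_after A x))"

definition recognizes_isolated ::
  "'a set \<Rightarrow> ('a, 'r) mon1qfa \<Rightarrow> 'a list set \<Rightarrow> real \<Rightarrow> real \<Rightarrow> bool" where
  "recognizes_isolated Sig A L lam \<delta> \<longleftrightarrow> \<delta> > 0 \<and>
     (\<forall>x\<in>lists Sig. (x \<in> L \<longleftrightarrow> p_acc A x > lam) \<and> \<bar>p_acc A x - lam\<bar> \<ge> \<delta>)"

fun Lsub :: "'a set \<Rightarrow> 'a list \<Rightarrow> 'a list set" where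
  "Lsub Sig [] = lists Sig"
| "Lsub Sig (a # as) = {u @ [a] @ v | u v. u \<in> lists Sig \<and> v \<in> Lsub Sig as}"

text \<open>Construction; indices are 0-based: paper index j (1..k+1) is j-1 here,
  the letter a_j is as ! (j-1), and the pair {j, j+1} for a_j = alpha becomes
  {i, i+1} with as ! i = alpha.\<close>
definition in_pair :: "'a list \<Rightarrow> 'a \<Rightarrow> nat \<Rightarrow> nat \<Rightarrow> bool" where
  "in_pair as \<alpha> r s \<longleftrightarrow> (\<exists>i<length as. as ! i = \<alpha> \<and> r \<in> {i, Suc i} \<and> s \<in> {i, Suc i})"

definition P_up :: "'a list \<Rightarrow> 'a \<Rightarrow> complex mat" where
  "P_up as \<alpha> = mat (Suc (length as)) (Suc (length as)) (\<lambda>(r, s).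
     if r = s \<and> (\<forall>i<length as. as ! i = \<alpha> \<longrightarrow> r \<notin> {i, Suc i}) then 1
     else if in_pair as \<alpha> r s then 1/2 else 0)"

definition P_down :: "'a list \<Rightarrow> 'a \<Rightarrow> complex mat" where
  "P_down as \<alpha> = mat (Suc (length as)) (Suc (length as)) (\<lambda>(r, s).
     if r = s \<and> in_pair as \<alpha> r r then 1/2
     else if r \<noteq> s \<and> in_pair as \<alpha> r s then -1/2 else 0)"

definition P_last :: "nat \<Rightarrow> complex mat" where
  "P_last k = mat (Suc k) (Suc k) (\<lambda>(r, s). if r = k \<and> s = k then 1 else 0)"

text \<open>A[a_1,...,a_k]; outcomes are bool: for alpha in S, True = up, False = down;
  for other letters the single outcome True with projector I;
  for #, True is the accepting outcome (F = {True}).\<close>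
definition A_constr :: "'a list \<Rightarrow> ('a, bool) mon1qfa" where
  "A_constr as = \<lparr>
     qdim = Suc (length as),
     qinit = unit_vec (Suc (length as)) 0,
     qvals = (\<lambda>c. case c of
                None \<Rightarrow> {True, False}
              | Some \<sigma> \<Rightarrow> (if \<sigma> \<in> set as then {True, False} else {True})),
     qproj = (\<lambda>c b. case c of
                None \<Rightarrow> (if b then P_last (length as)
                         else 1\<^sub>m (Suc (length as)) - P_last (length as))
              | Some \<sigma> \<Rightarrow> (if \<sigma> \<in> set as then (if b then P_up as \<sigma> else P_down as \<sigma>)
                           else 1\<^sub>m (Suc (length as)))),
     qacc = {True} \<rparr>"

end

theory Submission
  imports Defs
begin

text \<open>The state of A[a_1,...,a_k] stays a diagonal density matrix diag(v). On a diagonal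
  matrix, measuring a letter \<alpha> averages the weights on every pair {j, j+1} with a_j = \<alpha>
  and leaves the other weights alone; the pairs of one letter are disjoint because adjacent
  letters of a_1...a_k differ. If reading x greedily matches the prefix a_1...a_m, then every
  state j \<le> m carries weight at least 2^-m and the states beyond m carry none: weight moves
  to the right only when a_{m+1} is read, and then it moves one step and is halved. Hence the
  acceptance probability, the weight of the last state, is at least 2^-k for x in L and 0
  otherwise, and 2^-k exceeds the cut-point by at least the isolation constant.\<close>

lemma sum_lessThan_eq_single:
  fixes g :: "nat \<Rightarrow> 'b::comm_monoid_add"
  assumes "b < n" and "\<And>t. t < n \<Longrightarrow> t \<noteq> b \<Longrightarrow> g t = 0"
  shows "(\<Sum>t<n. g t) = g b"
  using assms by (subst sum.mono_neutral_right[of "{..<n}" "{b}"]) auto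

lemma sum_lessThan_eq_pair:
  fixes g :: "nat \<Rightarrow> 'b::comm_monoid_add"
  assumes "Suc b < n" and "\<And>t. t < n \<Longrightarrow> t \<noteq> b \<Longrightarrow> t \<noteq> Suc b \<Longrightarrow> g t = 0"
  shows "(\<Sum>t<n. g t) = g b + g (Suc b)"
  using assms by (subst sum.mono_neutral_right[of "{..<n}" "{b, Suc b}"]) auto

lemma index_mult_mat_square:
  assumes "A \<in> carrier_mat n n" "B \<in> carrier_mat n n" "i < n" "j < n"
  shows "(A * B) $$ (i, j) = (\<Sum>t<n. A $$ (i, t) * B $$ (t, j))"
  using assms by (simp add: scalar_prod_def lessThan_atLeast0)

lemma mat_nonzero_if_diag_entry:
  "A \<in> carrier_mat n n \<Longrightarrow> i < n \<Longrightarrow> A $$ (i, i) \<noteq> 0 \<Longrightarrow> A \<noteq> 0\<^sub>m n n"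
  by auto

lemma is_orth_projector_complement:
  assumes "is_orth_projector n P"
  shows "is_orth_projector n (1\<^sub>m n - P)" and "P * (1\<^sub>m n - P) = 0\<^sub>m n n"
    and "(1\<^sub>m n - P) * P = 0\<^sub>m n n"
proof -
  have P: "P \<in> carrier_mat n n" and PP: "P * P = P"
    and herm: "\<And>i j. i < n \<Longrightarrow> j < n \<Longrightarrow> P $$ (i, j) = cnj (P $$ (j, i))"
    using assms unfolding is_orth_projector_def by blast+
  have one: "1\<^sub>m n \<in> carrier_mat n n" by simp
  have Q: "1\<^sub>m n - P \<in> carrier_mat n n" using P by (rule minus_carrier_mat)
  have PP0: "P - P = 0\<^sub>m n n" using P by (rule minus_r_inv_mat)
  show PQ: "P * (1\<^sub>m n - P) = 0\<^sub>m n n"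
    unfolding mult_minus_distrib_mat[OF P one P] right_mult_one_mat[OF P] PP PP0 ..
  show "(1\<^sub>m n - P) * P = 0\<^sub>m n n"
    unfolding minus_mult_distrib_mat[OF one P P] left_mult_one_mat[OF P] PP PP0 ..
  have "(1\<^sub>m n - P) * (1\<^sub>m n - P) = 1\<^sub>m n - P - 0\<^sub>m n n"
    unfolding minus_mult_distrib_mat[OF one P Q] left_mult_one_mat[OF Q] PQ ..
  also have "\<dots> = 1\<^sub>m n - P" using P by (intro eq_matI) auto
  finally have "(1\<^sub>m n - P) * (1\<^sub>m n - P) = 1\<^sub>m n - P" .
  moreover have "(1\<^sub>m n - P) $$ (i, j) = cnj ((1\<^sub>m n - P) $$ (j, i))" if "i < n" "j < n" for i j
    using P that herm[OF that] by simp
  ultimately show "is_orth_projector n (1\<^sub>m n - P)"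
    using Q unfolding is_orth_projector_def by blast
qed

lemma is_observable_projector_pair:
  assumes "is_orth_projector n P" and "P \<noteq> 0\<^sub>m n n" and "1\<^sub>m n - P \<noteq> 0\<^sub>m n n"
  shows "is_observable n {True, False} (\<lambda>b. if b then P else 1\<^sub>m n - P)"
proof -
  have P: "P \<in> carrier_mat n n" using assms(1) unfolding is_orth_projector_def by blast
  have "P $$ (i, j) + (1\<^sub>m n - P) $$ (i, j) = 1\<^sub>m n $$ (i, j)" if "i < n" "j < n" for i j
    using P that by simp
  then show ?thesis
    using assms is_orth_projector_complement[OF assms(1)] unfolding is_observable_def by auto
qed

lemma is_observable_identity:
  assumes "n > 0"
  shows "is_observable n {r} (\<lambda>_. 1\<^sub>m n)"
proof -
  have "(1\<^sub>m n :: complex mat) \<noteq> 0\<^sub>m n n"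
    using assms by (intro mat_nonzero_if_diag_entry[of _ n 0]) auto
  then show ?thesis unfolding is_observable_def is_orth_projector_def by simp
qed

section \<open>The projectors of a letter\<close>

definition in_block :: "'a list \<Rightarrow> 'a \<Rightarrow> nat \<Rightarrow> nat \<Rightarrow> bool" where
  "in_block as \<alpha> b r \<longleftrightarrow> b < length as \<and> as ! b = \<alpha> \<and> (r = b \<or> r = Suc b)"

lemma in_block_unique:
  assumes "distinct_adj as" "in_block as \<alpha> b r" "in_block as \<alpha> b' r"
  shows "b = b'"
  using assms distinct_adj_nth[OF assms(1), of b] distinct_adj_nth[OF assms(1), of b']
  unfolding in_block_def by auto

lemma in_block_less: "in_block as \<alpha> b r \<Longrightarrow> r < Suc (length as)"
  unfolding in_block_def by auto

lemma in_block_endpoints: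
  assumes "in_block as \<alpha> b r"
  shows "in_block as \<alpha> b b" and "in_block as \<alpha> b (Suc b)"
  using assms unfolding in_block_def by auto

lemma in_pair_iff_in_block:
  assumes "distinct_adj as" "in_block as \<alpha> b r"
  shows "in_pair as \<alpha> r s \<longleftrightarrow> s = b \<or> s = Suc b"
proof
  assume "in_pair as \<alpha> r s"
  then obtain i where "in_block as \<alpha> i r" "s = i \<or> s = Suc i"
    unfolding in_pair_def in_block_def by auto
  with in_block_unique[OF assms(1) _ assms(2)] show "s = b \<or> s = Suc b" by blast
qed (use assms(2) in \<open>auto simp: in_pair_def in_block_def\<close>)

lemma not_in_pair_if_outside_blocks:
  "\<not> (\<exists>b. in_block as \<alpha> b r) \<Longrightarrow> \<not> in_pair as \<alpha> r s"
  unfolding in_pair_def in_block_def by auto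

lemma in_block_if_in_set:
  "\<alpha> \<in> set as \<Longrightarrow> \<exists>b. in_block as \<alpha> b b"
  unfolding in_block_def by (auto simp: in_set_conv_nth)

lemma P_up_dim [simp]:
  "dim_row (P_up as \<alpha>) = Suc (length as)" "dim_col (P_up as \<alpha>) = Suc (length as)"
  unfolding P_up_def by simp_all

lemma P_up_carrier [simp]: "P_up as \<alpha> \<in> carrier_mat (Suc (length as)) (Suc (length as))"
  by (simp add: carrier_matI)

lemma P_down_dim [simp]:
  "dim_row (P_down as \<alpha>) = Suc (length as)" "dim_col (P_down as \<alpha>) = Suc (length as)"
  unfolding P_down_def by simp_all

lemma P_down_carrier [simp]: "P_down as \<alpha> \<in> carrier_mat (Suc (length as)) (Suc (length as))"
  by (simp add: carrier_matI)

lemma P_up_entry: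
  assumes "r < Suc (length as)" "s < Suc (length as)"
  shows "P_up as \<alpha> $$ (r, s) = (if in_pair as \<alpha> r s then 1/2 else if r = s then 1 else 0)"
proof -
  have "(\<forall>i<length as. as ! i = \<alpha> \<longrightarrow> r \<notin> {i, Suc i}) \<longleftrightarrow> \<not> in_pair as \<alpha> r r"
    unfolding in_pair_def by blast
  then show ?thesis using assms unfolding P_up_def by auto
qed

lemma P_down_entry:
  assumes "r < Suc (length as)" "s < Suc (length as)"
  shows "P_down as \<alpha> $$ (r, s) = (if in_pair as \<alpha> r s then if r = s then 1/2 else -1/2 else 0)"
  using assms unfolding P_down_def by auto

lemma P_up_entry_in_block:
  assumes "distinct_adj as" "in_block as \<alpha> b r" "s < Suc (length as)"
  shows "P_up as \<alpha> $$ (r, s) = (if s = b \<or> s = Suc b then 1/2 else 0)"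
  using P_up_entry[OF in_block_less[OF assms(2)] assms(3)]
    in_pair_iff_in_block[OF assms(1,2)] assms(2) unfolding in_block_def by auto

lemma P_up_entry_outside_blocks:
  assumes "\<not> (\<exists>b. in_block as \<alpha> b r)" "r < Suc (length as)" "s < Suc (length as)"
  shows "P_up as \<alpha> $$ (r, s) = (if r = s then 1 else 0)"
  using P_up_entry[OF assms(2,3)] not_in_pair_if_outside_blocks[OF assms(1)] by simp

lemma P_down_entry_in_block:
  assumes "distinct_adj as" "in_block as \<alpha> b r" "s < Suc (length as)"
  shows "P_down as \<alpha> $$ (r, s) = (if s = b \<or> s = Suc b then if r = s then 1/2 else -1/2 else 0)"
  using P_down_entry[OF in_block_less[OF assms(2)] assms(3)]
    in_pair_iff_in_block[OF assms(1,2)] by simp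

lemma P_down_entry_outside_blocks:
  assumes "\<not> (\<exists>b. in_block as \<alpha> b r)" "r < Suc (length as)" "s < Suc (length as)"
  shows "P_down as \<alpha> $$ (r, s) = 0"
  using P_down_entry[OF assms(2,3)] not_in_pair_if_outside_blocks[OF assms(1)] by simp

lemma P_down_eq_one_minus_P_up: "P_down as \<alpha> = 1\<^sub>m (Suc (length as)) - P_up as \<alpha>"
proof (rule eq_matI)
  fix r s assume "r < dim_row (1\<^sub>m (Suc (length as)) - P_up as \<alpha>)"
    "s < dim_col (1\<^sub>m (Suc (length as)) - P_up as \<alpha>)"
  then have rs: "r < Suc (length as)" "s < Suc (length as)" by auto
  have "in_pair as \<alpha> r s \<Longrightarrow> in_pair as \<alpha> r r" unfolding in_pair_def by auto
  then show "P_down as \<alpha> $$ (r, s) = (1\<^sub>m (Suc (length as)) - P_up as \<alpha>) $$ (r, s)"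
    using rs by (simp add: P_up_entry P_down_entry)
qed auto

lemma P_up_idempotent:
  assumes "distinct_adj as"
  shows "P_up as \<alpha> * P_up as \<alpha> = P_up as \<alpha>"
proof (rule eq_matI)
  let ?n = "Suc (length as)" and ?U = "P_up as \<alpha>"
  fix r s assume "r < dim_row ?U" "s < dim_col ?U"
  then have r: "r < ?n" and s: "s < ?n" by auto
  have "(?U * ?U) $$ (r, s) = (\<Sum>t<?n. ?U $$ (r, t) * ?U $$ (t, s))"
    by (rule index_mult_mat_square) (use r s in auto)
  also have "\<dots> = ?U $$ (r, s)"
  proof (cases "\<exists>b. in_block as \<alpha> b r")
    case True
    then obtain b where b: "in_block as \<alpha> b r" by blast
    note ends = in_block_endpoints[OF b]
    have "(\<Sum>t<?n. ?U $$ (r, t) * ?U $$ (t, s)) = ?U $$ (r, b) * ?U $$ (b, s) + ?U $$ (r, Suc b) * ?U $$ (Suc b, s)"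
      by (rule sum_lessThan_eq_pair)
        (use in_block_less[OF ends(2)] P_up_entry_in_block[OF assms b] in auto)
    then show ?thesis
      using in_block_less[OF ends(2)] s
      by (simp add: P_up_entry_in_block[OF assms b] P_up_entry_in_block[OF assms ends(1)]
          P_up_entry_in_block[OF assms ends(2)])
  next
    case False
    then show ?thesis
      using r s by (subst sum_lessThan_eq_single[of r]) (auto simp: P_up_entry_outside_blocks)
  qed
  finally show "(?U * ?U) $$ (r, s) = ?U $$ (r, s)" .
qed auto

lemma P_up_is_orth_projector:
  assumes "distinct_adj as"
  shows "is_orth_projector (Suc (length as)) (P_up as \<alpha>)"
proof -
  have "in_pair as \<alpha> r s \<longleftrightarrow> in_pair as \<alpha> s r" for r s unfolding in_pair_def by blast
  then show ?thesis
    unfolding is_orth_projector_def using P_up_idempotent[OF assms] by (simp add: P_up_entry)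
qed

lemma P_last_is_orth_projector: "is_orth_projector (Suc k) (P_last k)"
proof -
  have "(P_last k * P_last k) $$ (r, s) = P_last k $$ (r, s)" if "r < Suc k" "s < Suc k" for r s
  proof -
    have "(P_last k * P_last k) $$ (r, s) = (\<Sum>t<Suc k. P_last k $$ (r, t) * P_last k $$ (t, s))"
      by (rule index_mult_mat_square) (use that in \<open>auto simp: P_last_def\<close>)
    also have "\<dots> = P_last k $$ (r, k) * P_last k $$ (k, s)"
      by (rule sum_lessThan_eq_single) (use that in \<open>auto simp: P_last_def\<close>)
    finally show ?thesis using that by (simp add: P_last_def)
  qed
  then have "P_last k * P_last k = P_last k" by (intro eq_matI) (auto simp: P_last_def)
  then show ?thesis unfolding is_orth_projector_def by (auto simp: P_last_def)
qed

section \<open>Evolution of the diagonal weights\<close>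

lemma index_sandwich_mat_diag:
  assumes "P \<in> carrier_mat n n" "i < n" "j < n"
  shows "(P * mat_diag n f * P) $$ (i, j) = (\<Sum>t<n. P $$ (i, t) * f t * P $$ (t, j))"
proof -
  have "(P * mat_diag n f * P) $$ (i, j) = (\<Sum>t<n. (P * mat_diag n f) $$ (i, t) * P $$ (t, j))"
    by (rule index_mult_mat_square) (use assms in auto)
  also have "\<dots> = (\<Sum>t<n. P $$ (i, t) * f t * P $$ (t, j))"
    by (intro sum.cong) (use assms in \<open>auto simp: mat_diag_mult_right\<close>)
  finally show ?thesis .
qed

text \<open>Both projectors of a letter are real and symmetric, so this says that
  P_up \<rho> P_up + P_down \<rho> P_down is diagonal with diagonal P_up v when \<rho> = diag v.\<close>
lemma P_up_P_down_products:
  assumes "distinct_adj as" "i < Suc (length as)" "j < Suc (length as)" "t < Suc (length as)"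
  shows "P_up as \<alpha> $$ (i, t) * P_up as \<alpha> $$ (t, j) + P_down as \<alpha> $$ (i, t) * P_down as \<alpha> $$ (t, j)
    = (if i = j then P_up as \<alpha> $$ (i, t) else 0)"
proof (cases "\<exists>b. in_block as \<alpha> b i")
  case True
  then obtain b where b: "in_block as \<alpha> b i" by blast
  note ends = in_block_endpoints[OF b]
  have up: "P_up as \<alpha> $$ (x, s) = (if s = b \<or> s = Suc b then 1/2 else 0)"
    and down: "P_down as \<alpha> $$ (x, s) = (if s = b \<or> s = Suc b then if x = s then 1/2 else -1/2 else 0)"
    if "x = b \<or> x = Suc b" "s < Suc (length as)" for x s
    using that P_up_entry_in_block[OF assms(1) ends(1)] P_up_entry_in_block[OF assms(1) ends(2)]
      P_down_entry_in_block[OF assms(1) ends(1)] P_down_entry_in_block[OF assms(1) ends(2)]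
    by auto
  have i: "i = b \<or> i = Suc b" using b unfolding in_block_def by blast
  show ?thesis using i up down assms(3,4) by (cases "t = b \<or> t = Suc b") auto
next
  case False
  then show ?thesis using assms(2-4)
    by (auto simp: P_up_entry_outside_blocks P_down_entry_outside_blocks)
qed

definition pair_average :: "'a list \<Rightarrow> 'a \<Rightarrow> (nat \<Rightarrow> real) \<Rightarrow> nat \<Rightarrow> real" where
  "pair_average as \<alpha> v r =
     (if r < length as \<and> as ! r = \<alpha> then (v r + v (Suc r)) / 2
      else if 0 < r \<and> r \<le> length as \<and> as ! (r - 1) = \<alpha> then (v (r - 1) + v r) / 2
      else v r)"

lemma pair_average_in_block:
  assumes "distinct_adj as" "in_block as \<alpha> b r"
  shows "pair_average as \<alpha> v r = (v b + v (Suc b)) / 2"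
proof -
  have b: "b < length as" "as ! b = \<alpha>" and r: "r = b \<or> r = Suc b"
    using assms(2) unfolding in_block_def by auto
  have "\<not> (Suc b < length as \<and> as ! Suc b = \<alpha>)"
    using b distinct_adj_nth[OF assms(1), of b] by auto
  with b r show ?thesis unfolding pair_average_def by (elim disjE) auto
qed

lemma pair_average_outside_blocks:
  assumes "\<not> (\<exists>b. in_block as \<alpha> b r)"
  shows "pair_average as \<alpha> v r = v r"
proof -
  have "\<not> in_block as \<alpha> r r" "\<not> in_block as \<alpha> (r - 1) r" using assms by blast+
  then show ?thesis unfolding pair_average_def in_block_def by auto
qed

lemma P_up_weighted_row_sum:
  assumes "distinct_adj as" "r < Suc (length as)"
  shows "(\<Sum>t<Suc (length as). P_up as \<alpha> $$ (r, t) * complex_of_real (v t))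
    = complex_of_real (pair_average as \<alpha> v r)"
proof (cases "\<exists>b. in_block as \<alpha> b r")
  case True
  then obtain b where b: "in_block as \<alpha> b r" by blast
  have "(\<Sum>t<Suc (length as). P_up as \<alpha> $$ (r, t) * complex_of_real (v t))
      = P_up as \<alpha> $$ (r, b) * v b + P_up as \<alpha> $$ (r, Suc b) * v (Suc b)"
    by (rule sum_lessThan_eq_pair)
      (use in_block_less[OF in_block_endpoints(2)[OF b]] P_up_entry_in_block[OF assms(1) b] in auto)
  then show ?thesis
    using in_block_less[OF in_block_endpoints(2)[OF b]]
    by (simp add: P_up_entry_in_block[OF assms(1) b] pair_average_in_block[OF assms(1) b]
        add_divide_distrib)
next
  case False
  then show ?thesis using assms(2)
    by (subst sum_lessThan_eq_single[of r])
      (auto simp: P_up_entry_outside_blocks pair_average_outside_blocks)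
qed

lemma A_constr_simps:
  "qdim (A_constr as) = Suc (length as)"
  "qinit (A_constr as) = unit_vec (Suc (length as)) 0"
  "qvals (A_constr as) None = {True, False}"
  "qproj (A_constr as) None = (\<lambda>b. if b then P_last (length as) else 1\<^sub>m (Suc (length as)) - P_last (length as))"
  "qacc (A_constr as) = {True}"
  "c \<in> set as \<Longrightarrow> qvals (A_constr as) (Some c) = {True, False}"
  "c \<in> set as \<Longrightarrow> qproj (A_constr as) (Some c) = (\<lambda>b. if b then P_up as c else P_down as c)"
  "c \<notin> set as \<Longrightarrow> qvals (A_constr as) (Some c) = {True}"
  "c \<notin> set as \<Longrightarrow> qproj (A_constr as) (Some c) = (\<lambda>_. 1\<^sub>m (Suc (length as)))"
  unfolding A_constr_def by auto

abbreviation weight_mat :: "nat \<Rightarrow> (nat \<Rightarrow> real) \<Rightarrow> complex mat" where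
  "weight_mat n v \<equiv> mat_diag n (\<lambda>i. complex_of_real (v i))"

lemma measure_step_weight_mat:
  assumes "distinct_adj as"
  shows "measure_step (A_constr as) (Some c) (weight_mat (Suc (length as)) v)
    = weight_mat (Suc (length as)) (pair_average as c v)"
proof (rule eq_matI)
  let ?n = "Suc (length as)" and ?W = "weight_mat (Suc (length as)) v"
  fix i j assume "i < dim_row (weight_mat ?n (pair_average as c v))"
    "j < dim_col (weight_mat ?n (pair_average as c v))"
  then have ij: "i < ?n" "j < ?n" by (auto simp: mat_diag_def)
  show "measure_step (A_constr as) (Some c) ?W $$ (i, j) = weight_mat ?n (pair_average as c v) $$ (i, j)"
  proof (cases "c \<in> set as")
    case True
    let ?U = "P_up as c" and ?D = "P_down as c"
    have "measure_step (A_constr as) (Some c) ?W $$ (i, j) = (?U * ?W * ?U) $$ (i, j) + (?D * ?W * ?D) $$ (i, j)"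
      using ij True by (simp add: measure_step_def A_constr_simps)
    also have "\<dots> = (\<Sum>t<?n. (?U $$ (i, t) * ?U $$ (t, j) + ?D $$ (i, t) * ?D $$ (t, j)) * v t)"
      unfolding index_sandwich_mat_diag[OF P_up_carrier ij] index_sandwich_mat_diag[OF P_down_carrier ij]
        sum.distrib[symmetric]
      by (intro sum.cong) (simp_all add: algebra_simps)
    also have "\<dots> = (\<Sum>t<?n. if i = j then ?U $$ (i, t) * v t else 0)"
      by (intro sum.cong) (simp_all add: P_up_P_down_products[OF assms ij])
    also have "\<dots> = (if i = j then \<Sum>t<?n. ?U $$ (i, t) * v t else 0)"
      by simp
    also have "\<dots> = weight_mat ?n (pair_average as c v) $$ (i, j)"
      using ij P_up_weighted_row_sum[OF assms ij(1), of c v]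
      by (auto simp: mat_diag_def simp del: sum.lessThan_Suc)
    finally show ?thesis .
  next
    case False
    then have "\<not> in_block as c b r" for b r unfolding in_block_def by auto
    with False ij show ?thesis
      by (simp add: measure_step_def A_constr_simps mat_diag_def pair_average_outside_blocks)
  qed
qed (auto simp: measure_step_def mat_diag_def A_constr_simps)

definition weights_after :: "'a list \<Rightarrow> 'a list \<Rightarrow> nat \<Rightarrow> real" where
  "weights_after as x = foldl (\<lambda>v c. pair_average as c v) (\<lambda>r. if r = 0 then 1 else 0) x"

lemma rho_after_A_constr:
  assumes "distinct_adj as"
  shows "rho_after (A_constr as) x = weight_mat (Suc (length as)) (weights_after as x)"
proof (induction x rule: rev_induct)
  case Nil
  show ?case
    unfolding rho_after_def weights_after_def rho0_def A_constr_simps mat_diag_def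
    by (rule eq_matI) auto
next
  case (snoc c x)
  then show ?case
    by (simp add: rho_after_def weights_after_def measure_step_weight_mat[OF assms])
qed

lemma p_acc_A_constr:
  assumes "distinct_adj as"
  shows "p_acc (A_constr as) x = weights_after as x (length as)"
proof -
  let ?k = "length as" and ?v = "weights_after as x"
  have P: "P_last ?k \<in> carrier_mat (Suc ?k) (Suc ?k)" by (simp add: P_last_def)
  have "mtrace (P_last ?k * weight_mat (Suc ?k) ?v) = (\<Sum>i<Suc ?k. P_last ?k $$ (i, i) * ?v i)"
    using P by (simp add: mtrace_def mat_diag_mult_right)
  also have "\<dots> = complex_of_real (?v ?k)"
    by (subst sum_lessThan_eq_single[of ?k]) (auto simp: P_last_def)
  finally show ?thesis
    by (simp add: p_acc_def A_constr_simps rho_after_A_constr[OF assms])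
qed

section \<open>Greedy matching of the pattern\<close>

definition match_step :: "'a list \<Rightarrow> nat \<Rightarrow> 'a \<Rightarrow> nat" where
  "match_step as m c = (if m < length as \<and> as ! m = c then Suc m else m)"

lemma match_step_cases:
  "match_step as m c = m \<or> (match_step as m c = Suc m \<and> m < length as \<and> as ! m = c)"
  unfolding match_step_def by auto

definition weight_invariant :: "'a list \<Rightarrow> nat \<Rightarrow> (nat \<Rightarrow> real) \<Rightarrow> bool" where
  "weight_invariant as m v \<longleftrightarrow> m \<le> length as \<and>
     (\<forall>r\<le>length as. (r \<le> m \<longrightarrow> 1 / 2 ^ m \<le> v r) \<and> (m < r \<longrightarrow> v r = 0))"

lemma pair_average_lower_bound:
  assumes adj: "distinct_adj as" and inv: "weight_invariant as m v"
    and r: "r \<le> match_step as m c"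
  shows "1 / 2 ^ match_step as m c \<le> pair_average as c v r"
proof -
  let ?m' = "match_step as m c"
  have lo: "1 / 2 ^ m \<le> v s" if "s \<le> m" for s using inv that unfolding weight_invariant_def by auto
  have hi: "v s = 0" if "m < s" "s \<le> length as" for s
    using inv that unfolding weight_invariant_def by auto
  have mono: "(1::real) / 2 ^ ?m' \<le> 1 / 2 ^ m"
    using match_step_cases[of as m c] by (auto simp: field_simps)
  show ?thesis
  proof (cases "\<exists>b. in_block as c b r")
    case True
    then obtain b where b: "in_block as c b r" by blast
    have bk: "b < length as" "as ! b = c" and rb: "r = b \<or> r = Suc b"
      using b unfolding in_block_def by auto
    have avg: "pair_average as c v r = (v b + v (Suc b)) / 2"
      by (rule pair_average_in_block[OF adj b])
    consider "Suc b \<le> m" | "b = m" | "m < b" by linarith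
    then show ?thesis
    proof cases
      case 1
      with lo[of b] lo[of "Suc b"] mono show ?thesis unfolding avg by simp
    next
      case 2
      with bk have "?m' = Suc m" by (simp add: match_step_def)
      with 2 bk lo[of b] hi[of "Suc b"] show ?thesis unfolding avg by simp
    next
      case 3
      with r rb match_step_cases[of as m c] have "b = Suc m" "as ! m = c" by auto
      with bk distinct_adj_nth[OF adj, of m] show ?thesis by simp
    qed
  next
    case False
    have "r \<le> m"
    proof (rule ccontr)
      assume "\<not> r \<le> m"
      with r match_step_cases[of as m c] have "in_block as c m r"
        unfolding in_block_def by auto
      with False show False by blast
    qed
    with lo[of r] mono show ?thesis by (simp add: pair_average_outside_blocks[OF False])
  qed
qed

lemma pair_average_vanishes:
  assumes adj: "distinct_adj as" and inv: "weight_invariant as m v"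
    and r: "match_step as m c < r" "r \<le> length as"
  shows "pair_average as c v r = 0"
proof -
  have hi: "v s = 0" if "m < s" "s \<le> length as" for s
    using inv that unfolding weight_invariant_def by auto
  have "m \<le> match_step as m c" by (simp add: match_step_def)
  show ?thesis
  proof (cases "\<exists>b. in_block as c b r")
    case True
    then obtain b where b: "in_block as c b r" by blast
    then have bk: "b < length as" "as ! b = c" and rb: "r = b \<or> r = Suc b"
      unfolding in_block_def by auto
    have "m < b"
    proof (rule ccontr)
      assume "\<not> m < b"
      with r rb \<open>m \<le> match_step as m c\<close> have "b = m" by auto
      with r rb bk show False by (simp add: match_step_def)
    qed
    with bk hi[of b] hi[of "Suc b"] show ?thesis
      by (simp add: pair_average_in_block[OF adj b])
  next
    case False
    with r hi[of r] \<open>m \<le> match_step as m c\<close> show ?thesis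
      by (simp add: pair_average_outside_blocks)
  qed
qed

lemma weight_invariant_match_step:
  assumes "distinct_adj as" "weight_invariant as m v"
  shows "weight_invariant as (match_step as m c) (pair_average as c v)"
proof -
  have "match_step as m c \<le> length as"
    using assms(2) unfolding weight_invariant_def match_step_def by auto
  with pair_average_lower_bound[OF assms] pair_average_vanishes[OF assms] show ?thesis
    unfolding weight_invariant_def by auto
qed

lemma weight_invariant_weights_after:
  assumes "distinct_adj as"
  shows "weight_invariant as (foldl (match_step as) 0 x) (weights_after as x)"
proof (induction x rule: rev_induct)
  case Nil
  show ?case unfolding weight_invariant_def weights_after_def by auto
next
  case (snoc c x)
  then show ?case
    using weight_invariant_match_step[OF assms] by (simp add: weights_after_def)
qed

lemma append_in_Lsub:
  assumes "w \<in> Lsub Sig bs" "y \<in> lists Sig"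
  shows "y @ w \<in> Lsub Sig bs"
proof (cases bs)
  case (Cons a bs')
  with assms(1) obtain u v where "w = u @ [a] @ v" "u \<in> lists Sig" "v \<in> Lsub Sig bs'" by auto
  with assms(2) have "y @ w = (y @ u) @ [a] @ v" "y @ u \<in> lists Sig" "v \<in> Lsub Sig bs'" by auto
  then show ?thesis unfolding Cons Lsub.simps by blast
qed (use assms in auto)

lemma Cons_in_Lsub_Cons_iff:
  assumes "c \<in> Sig" "x \<in> lists Sig"
  shows "c # x \<in> Lsub Sig (a # bs) \<longleftrightarrow> x \<in> Lsub Sig (if c = a then bs else a # bs)"
proof
  assume "c # x \<in> Lsub Sig (a # bs)"
  then obtain u v where uv: "c # x = u @ [a] @ v" "u \<in> lists Sig" "v \<in> Lsub Sig bs" by auto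
  show "x \<in> Lsub Sig (if c = a then bs else a # bs)"
  proof (cases u)
    case Nil
    with uv show ?thesis by (auto intro: append_in_Lsub[of _ _ _ "[a]"])
  next
    case (Cons u1 u')
    with uv assms have "x = u' @ [a] @ v" "u' \<in> lists Sig" "a \<in> Sig" by auto
    with uv(3) append_in_Lsub[OF uv(3), of "u' @ [a]"] show ?thesis
      unfolding Lsub.simps by auto
  qed
next
  assume x: "x \<in> Lsub Sig (if c = a then bs else a # bs)"
  show "c # x \<in> Lsub Sig (a # bs)"
  proof (cases "c = a")
    case True
    with x have "c # x = [] @ [a] @ x" "[] \<in> lists Sig" "x \<in> Lsub Sig bs" by auto
    then show ?thesis unfolding Lsub.simps by blast
  next
    case False
    with x assms(1) show ?thesis using append_in_Lsub[of x Sig "a # bs" "[c]"] by simp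
  qed
qed

lemma Cons_in_Lsub_drop_iff:
  assumes "c \<in> Sig" "x \<in> lists Sig"
  shows "c # x \<in> Lsub Sig (drop m as) \<longleftrightarrow> x \<in> Lsub Sig (drop (match_step as m c) as)"
proof (cases "m < length as")
  case True
  then have drop_m: "drop m as = as ! m # drop (Suc m) as" by (rule Cons_nth_drop_Suc[symmetric])
  show ?thesis
  proof (cases "c = as ! m")
    case True
    with \<open>m < length as\<close> have "match_step as m c = Suc m" by (simp add: match_step_def)
    with True show ?thesis unfolding drop_m Cons_in_Lsub_Cons_iff[OF assms] by simp
  next
    case False
    then have "match_step as m c = m" by (auto simp: match_step_def)
    with False show ?thesis unfolding drop_m Cons_in_Lsub_Cons_iff[OF assms] by (simp only: if_False drop_m)
  qed
qed (use assms in \<open>simp add: match_step_def\<close>)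

lemma Lsub_drop_iff_match:
  "x \<in> lists Sig \<Longrightarrow> m \<le> length as \<Longrightarrow>
     x \<in> Lsub Sig (drop m as) \<longleftrightarrow> foldl (match_step as) m x = length as"
proof (induction x arbitrary: m)
  case Nil
  then show ?case by (cases "drop m as") auto
next
  case (Cons c x)
  then have "match_step as m c \<le> length as" by (simp add: match_step_def)
  with Cons show ?case by (simp add: Cons_in_Lsub_drop_iff)
qed

lemma A_constr_is_observable:
  assumes "distinct_adj as" "as \<noteq> []"
  shows "is_observable (Suc (length as)) (qvals (A_constr as) c) (qproj (A_constr as) c)"
proof (cases c)
  case None
  let ?k = "length as"
  have "P_last ?k \<noteq> 0\<^sub>m (Suc ?k) (Suc ?k)"
    by (rule mat_nonzero_if_diag_entry[of _ _ ?k]) (auto simp: P_last_def)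
  moreover have "1\<^sub>m (Suc ?k) - P_last ?k \<noteq> 0\<^sub>m (Suc ?k) (Suc ?k)"
    using assms(2) by (intro mat_nonzero_if_diag_entry[of _ _ 0]) (auto simp: P_last_def)
  ultimately show ?thesis
    unfolding None A_constr_simps by (rule is_observable_projector_pair[OF P_last_is_orth_projector])
next
  case (Some \<alpha>)
  show ?thesis
  proof (cases "\<alpha> \<in> set as")
    case True
    obtain b where b: "in_block as \<alpha> b b" using in_block_if_in_set[OF True] by blast
    have bn: "b < Suc (length as)" by (rule in_block_less[OF b])
    have "P_up as \<alpha> \<noteq> 0\<^sub>m (Suc (length as)) (Suc (length as))"
      by (rule mat_nonzero_if_diag_entry[OF P_up_carrier bn])
        (simp add: P_up_entry_in_block[OF assms(1) b bn])
    moreover have "P_down as \<alpha> \<noteq> 0\<^sub>m (Suc (length as)) (Suc (length as))"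
      by (rule mat_nonzero_if_diag_entry[OF P_down_carrier bn])
        (simp add: P_down_entry_in_block[OF assms(1) b bn])
    ultimately show ?thesis
      unfolding Some A_constr_simps(6,7)[OF True] P_down_eq_one_minus_P_up
      by (rule is_observable_projector_pair[OF P_up_is_orth_projector[OF assms(1)]])
  qed (simp add: Some A_constr_simps is_observable_identity)
qed

lemma A_constr_is_mon1qfa:
  assumes "distinct_adj as" "as \<noteq> []"
  shows "is_mon1qfa Sig (A_constr as)"
proof -
  have "(\<Sum>i<Suc (length as). (cmod (unit_vec (Suc (length as)) 0 $ i))\<^sup>2) = 1"
    by (subst sum_lessThan_eq_single[of 0]) auto
  then show ?thesis
    unfolding is_mon1qfa_def using A_constr_is_observable[OF assms] by (simp add: A_constr_simps)
qed

lemma p_acc_A_constr_in_Lsub: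
  assumes "distinct_adj as" "x \<in> lists Sig" "x \<in> Lsub Sig as"
  shows "1 / 2 ^ length as \<le> p_acc (A_constr as) x"
proof -
  have "foldl (match_step as) 0 x = length as"
    using Lsub_drop_iff_match[OF assms(2), of 0 as] assms(3) by simp
  with weight_invariant_weights_after[OF assms(1), of x] show ?thesis
    unfolding weight_invariant_def p_acc_A_constr[OF assms(1)] by auto
qed

lemma p_acc_A_constr_notin_Lsub:
  assumes "distinct_adj as" "x \<in> lists Sig" "x \<notin> Lsub Sig as"
  shows "p_acc (A_constr as) x = 0"
proof -
  have "foldl (match_step as) 0 x \<noteq> length as"
    using Lsub_drop_iff_match[OF assms(2), of 0 as] assms(3) by simp
  with weight_invariant_weights_after[OF assms(1), of x] show ?thesis
    unfolding weight_invariant_def p_acc_A_constr[OF assms(1)] by auto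
qed

lemma cut_point_isolation:
  fixes k :: nat
  shows "(1::real) / 2 ^ (2 * k + 1) + 1 / 2 ^ (2 * (k + 1)) \<le> 1 / 2 ^ k"
    and "(1::real) / 2 ^ (2 * (k + 1)) \<le> 1 / 2 ^ (2 * k + 1)"
proof -
  define q :: real where "q = 2 ^ k"
  have q: "1 \<le> q" unfolding q_def by simp
  have "(2::real) ^ (2 * k + 1) = 2 * q * q" "(2::real) ^ (2 * (k + 1)) = 4 * q * q"
    unfolding q_def by (simp_all add: power_add power_mult power2_eq_square flip: power_mult_distrib)
  moreover have "1 / (2 * q * q) + 1 / (4 * q * q) \<le> 1 / q" "1 / (4 * q * q) \<le> 1 / (2 * q * q)"
    using q by (simp_all add: field_simps)
  ultimately show "(1::real) / 2 ^ (2 * k + 1) + 1 / 2 ^ (2 * (k + 1)) \<le> 1 / 2 ^ k"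
    and "(1::real) / 2 ^ (2 * (k + 1)) \<le> 1 / 2 ^ (2 * k + 1)"
    unfolding q_def by simp_all
qed

theorem theorem5:
  fixes Sig :: "'a set" and as :: "'a list"
  assumes "finite Sig"
    and "length as \<ge> 1"
    and "set as \<subseteq> Sig"
    and "\<forall>i. Suc i < length as \<longrightarrow> as ! i \<noteq> as ! Suc i"
  shows "is_mon1qfa Sig (A_constr as) \<and>
         recognizes_isolated Sig (A_constr as) (Lsub Sig as)
           (1 / 2 ^ (2 * length as + 1)) (1 / 2 ^ (2 * (length as + 1)))"
proof -
  have adj: "distinct_adj as" using assms(4) by (simp add: distinct_adj_conv_nth)
  have ne: "as \<noteq> []" using assms(2) by auto
  let ?lam = "1 / 2 ^ (2 * length as + 1) :: real" and ?del = "1 / 2 ^ (2 * (length as + 1)) :: real"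
  have "0 < ?del" by simp
  note bounds = cut_point_isolation[of "length as"]
  have "(x \<in> Lsub Sig as \<longleftrightarrow> ?lam < p_acc (A_constr as) x) \<and> ?del \<le> \<bar>p_acc (A_constr as) x - ?lam\<bar>"
    if "x \<in> lists Sig" for x
  proof (cases "x \<in> Lsub Sig as")
    case True
    then have "?lam < p_acc (A_constr as) x" "?del \<le> p_acc (A_constr as) x - ?lam"
      using bounds(1) \<open>0 < ?del\<close> p_acc_A_constr_in_Lsub[OF adj that] by linarith+
    with True show ?thesis using abs_ge_self[of "p_acc (A_constr as) x - ?lam"] by linarith
  next
    case False
    with bounds(2) p_acc_A_constr_notin_Lsub[OF adj that] show ?thesis by simp
  qed
  then show ?thesis
    unfolding recognizes_isolated_def using A_constr_is_mon1qfa[OF adj ne] by simp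
qed

end
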